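(* For each $2$-cocycle $f = f_1 + f_2 + f_3 \in Z^2(\mathfrak{g},\mathfrak{z})$, there exists a decomposition $f_1 = f_1^0 + f_1^1$ into linear maps $f_1^0, f_1^1 \colon \Lambda^2(A) \otimes S^2(\mathfrak{k}) \to \mathfrak{z}$, where $$ f_1^0(\mathfrak{g},\mathfrak{g}') = \{0\}, \quad \operatorname{im}(\tilde f_1^1) \subseteq \operatorname{Sym}^2(\mathfrak{k},\mathfrak{z})^{\mathfrak{k}} \quad \mbox{ and } \quad T_0(A) \subseteq \ker \tilde f_1^1. $$
   Context: Let $A$ be a unital commutative associative algebra over a field $\mathbb{K}$ with $2 \in \mathbb{K}^\times$, $\mathfrak{k}$ a $\mathbb{K}$-Lie algebra, $\mathfrak{k}' := [\mathfrak{k},\mathfrak{k}]$, and $\mathfrak{g} := A \otimes \mathfrak{k}$ with bracket $[a \otimes x, a' \otimes x'] = aa' \otimes [x,x']$, so $\mathfrak{g}' = A \otimes \mathfrak{k}'$. Let $\mathfrak{z}$ be a vector space, viewed as a trivial $\mathfrak{g}$-module. Write $S^2(A) = (A \vee \mathbf{1}) \oplus I_A$, where $I_A$ is the kernel of the multiplication map $S^2(A) \to A$ and $A$ is identified with $A\vee\mathbf{1}$. There is a linear isomorphism $P=(p_1,p_2,p_3)\colon \Lambda^2(\mathfrak{g}) \to (\Lambda^2(A) \otimes S^2(\mathfrak{k})) \oplus (A \otimes \Lambda^2(\mathfrak{k})) \oplus (I_A \otimes \Lambda^2(\mathfrak{k}))$ with $p_1(ax\wedge by) = a\wedge b \otimes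 x\vee y$, $p_2(ax\wedge by) = ab\otimes x\wedge y$, $p_3(ax\wedge by) = (a\vee b - ab\vee \mathbf{1})\otimes x\wedge y$. Every alternating bilinear map $f\colon \Lambda^2(\mathfrak{g}) \to \mathfrak{z}$ is written $f = f_1\circ p_1 + f_2\circ p_2 + f_3 \circ p_3$ (abbreviated $f = f_1+f_2+f_3$) with linear maps $f_1 \colon \Lambda^2(A)\otimes S^2(\mathfrak{k}) \to \mathfrak{z}$, $f_2\colon A\otimes \Lambda^2(\mathfrak{k})\to\mathfrak{z}$, $f_3 \colon I_A\otimes\Lambda^2(\mathfrak{k})\to\mathfrak{z}$. For such a map $g$ on $\Lambda^2(A)\otimes S^2(\mathfrak{k})$, $\tilde g \colon A\times A \to \operatorname{Sym}^2(\mathfrak{k},\mathfrak{z})$ denotes the alternating map $\tilde g(a,b)(x,y) := g(a\wedge b\otimes x\vee y)$. $\operatorname{Sym}^2(\mathfrak{k},\mathfrak{z})^{\mathfrak{k}}$ is the space of invariant symmetric $\mathfrak{z}$-valued bilinear maps on $\mathfrak{k}$, and $T_0(A) := \operatorname{span}\{ab\wedge c + bc\wedge a + ca\wedge b - abc\wedge \mathbf{1} : a,b,c\in A\} \subseteq \Lambda^2(A)$. The condition $f_1^0(\mathfrak{g},\mathfrak{g}')=\{0\}$ means that $f_1^0\circ p_1$ vanishes on $\mathfrak{g}\times\mathfrak{g}'$. *)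

theory Defs
  imports Main "HOL.Vector_Spaces"
begin

text \<open>Linearity in each of four arguments (a 4-linear map).  A linear map on a
tensor product of four spaces is encoded by its universal property as such a map.\<close>
definition quadlinear ::
  "('k::field \<Rightarrow> 'a::ab_group_add \<Rightarrow> 'a) \<Rightarrow> ('k \<Rightarrow> 'b::ab_group_add \<Rightarrow> 'b) \<Rightarrow> ('k \<Rightarrow> 'c::ab_group_add \<Rightarrow> 'c) \<Rightarrow> ('k \<Rightarrow> 'd::ab_group_add \<Rightarrow> 'd)
    \<Rightarrow> ('k \<Rightarrow> 'z::ab_group_add \<Rightarrow> 'z) \<Rightarrow> ('a \<Rightarrow> 'b \<Rightarrow> 'c \<Rightarrow> 'd \<Rightarrow> 'z) \<Rightarrow> bool" where
  "quadlinear s1 s2 s3 s4 t F \<longleftrightarrow>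
     (\<forall>b c d. Vector_Spaces.linear s1 t (\<lambda>a. F a b c d)) \<and>
     (\<forall>a c d. Vector_Spaces.linear s2 t (\<lambda>b. F a b c d)) \<and>
     (\<forall>a b d. Vector_Spaces.linear s3 t (\<lambda>c. F a b c d)) \<and>
     (\<forall>a b c. Vector_Spaces.linear s4 t (\<lambda>d. F a b c d))"

definition trilinear ::
  "('k::field \<Rightarrow> 'a::ab_group_add \<Rightarrow> 'a) \<Rightarrow> ('k \<Rightarrow> 'b::ab_group_add \<Rightarrow> 'b) \<Rightarrow> ('k \<Rightarrow> 'c::ab_group_add \<Rightarrow> 'c)
    \<Rightarrow> ('k \<Rightarrow> 'z::ab_group_add \<Rightarrow> 'z) \<Rightarrow> ('a \<Rightarrow> 'b \<Rightarrow> 'c \<Rightarrow> 'z) \<Rightarrow> bool" where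
  "trilinear s1 s2 s3 t F \<longleftrightarrow>
     (\<forall>b c. Vector_Spaces.linear s1 t (\<lambda>a. F a b c)) \<and>
     (\<forall>a c. Vector_Spaces.linear s2 t (\<lambda>b. F a b c)) \<and>
     (\<forall>a b. Vector_Spaces.linear s3 t (\<lambda>c. F a b c))"

text \<open>A unital commutative associative K-algebra: the ring structure is the type's
  comm_ring_1 structure, sA is the scalar multiplication.\<close>
definition comm_algebra :: "('k::field \<Rightarrow> 'a::comm_ring_1 \<Rightarrow> 'a) \<Rightarrow> bool" where
  "comm_algebra sA \<longleftrightarrow> vector_space sA \<and> (\<forall>c a b. sA c (a * b) = sA c a * b)"

definition lie_algebra :: "('k::field \<Rightarrow> 'l::ab_group_add \<Rightarrow> 'l) \<Rightarrow> ('l \<Rightarrow> 'l \<Rightarrow> 'l) \<Rightarrow> bool" where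
  "lie_algebra sL br \<longleftrightarrow> vector_space sL \<and>
     (\<forall>y. Vector_Spaces.linear sL sL (\<lambda>x. br x y)) \<and>
     (\<forall>x. Vector_Spaces.linear sL sL (\<lambda>y. br x y)) \<and>
     (\<forall>x. br x x = 0) \<and>
     (\<forall>x y z. br x (br y z) + br y (br z x) + br z (br x y) = 0)"

definition derived_algebra :: "('k::field \<Rightarrow> 'l::ab_group_add \<Rightarrow> 'l) \<Rightarrow> ('l \<Rightarrow> 'l \<Rightarrow> 'l) \<Rightarrow> 'l set" where
  "derived_algebra sL br = module.span sL {br x y | x y. True}"

definition invariant_form :: "('l \<Rightarrow> 'l \<Rightarrow> 'l) \<Rightarrow> ('l \<Rightarrow> 'l \<Rightarrow> 'z::ab_group_add) \<Rightarrow> bool" where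
  "invariant_form br \<beta> \<longleftrightarrow> (\<forall>w x y. \<beta> (br w x) y + \<beta> x (br w y) = 0)"

end

theory Submission
  imports Defs
begin

(* Comparing the cocycle identity for the triples (a, b, 1) and (b, a, 1) isolates the f1-terms;
   as 2 is invertible this gives f1(a,b)([z,x],y) = f1(a,b)([y,z],x), so every f1(a,b) is
   invariant. Comparing (a, b, 1) with (ab, 1, 1) in the same way shows that f3(a,b) and
   f3(ab,1) agree on [k,k] x k, and then comparing (a, b, c) with (abc, 1, 1) yields the
   T_0-relation for f1 whenever its first k-argument lies in k' = [k,k].
   Now choose a linear projection p of k with kernel k'. The part f1^0 := f1(p -, p -) vanishes
   as soon as one argument lies in k', so f1^1 := f1 - f1^0 inherits invariance from f1; and
   f1^1(x, y) = f1((1 - p) x, y) + f1((1 - p) y, p x) evaluates f1 only with first argument in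
   k', so f1^1 satisfies the T_0-relation. *)

lemma (in vector_space) add_self_eq_0_imp_eq_0:
  fixes v :: 'b
  assumes "(2::'a) \<noteq> 0" and "v + v = 0"
  shows "v = 0"
proof -
  have "scale 2 v = scale (1 + 1) v" by simp
  also have "\<dots> = v + v" by (simp only: scale_left_distrib scale_one)
  finally show ?thesis using assms by simp
qed

lemma (in vector_space) exists_linear_projection_along_span:
  obtains p where "Vector_Spaces.linear scale scale p"
    and "\<And>x. x \<in> span S \<Longrightarrow> p x = 0" and "\<And>x. x - p x \<in> span S"
proof -
  interpret vector_space_pair scale scale ..
  obtain B where B: "B \<subseteq> span S" "independent B" "span S \<subseteq> span B"
    using maximal_independent_subset by blast
  then have span_B: "span B = span S"
    by (simp add: span_minimal subset_antisym)
  define q where "q = construct B id"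
  have q_lin: "Vector_Spaces.linear scale scale q"
    unfolding q_def by (rule linear_construct[OF B(2)])
  show thesis
  proof
    show "Vector_Spaces.linear scale scale (\<lambda>x. x - q x)"
      by (rule linear_compose_sub[OF linear_id[unfolded id_def] q_lin])
    show "x - q x = 0" if "x \<in> span S" for x
      using linear_eq_on_span[OF q_lin linear_id, where B=B and x=x] that span_B
      by (simp add: q_def construct_basis[OF B(2)])
    show "x - (x - q x) \<in> span S" for x
      using construct_in_span[OF B(2), of id x] span_B by (simp add: q_def)
  qed
qed

lemma skew_if_alternating:
  fixes g :: "'a::ab_group_add \<Rightarrow> 'a \<Rightarrow> 'b::ab_group_add"
  assumes alt: "\<And>x. g x x = 0"
    and add_left: "\<And>x y z. g (x + y) z = g x z + g y z"
    and add_right: "\<And>x y z. g x (y + z) = g x y + g x z"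
  shows "g y x = - g x y"
proof -
  have "0 = g (x + y) (x + y)" by (rule alt[symmetric])
  also have "\<dots> = g x x + g x y + (g y x + g y y)"
    by (simp only: add_left add_right ac_simps)
  also have "\<dots> = g x y + g y x" by (simp add: alt)
  finally show ?thesis by (metis add.commute eq_neg_iff_add_eq_0)
qed

lemma invariant_formI:
  fixes \<beta> :: "'l::ab_group_add \<Rightarrow> 'l \<Rightarrow> 'z::ab_group_add"
  assumes sym: "\<And>x y. \<beta> x y = \<beta> y x"
    and br_skew: "\<And>x y. br y x = - br x y"
    and neg_right: "\<And>x y. \<beta> x (- y) = - \<beta> x y"
    and cyclic: "\<And>x y z. \<beta> (br z x) y = \<beta> (br y z) x"
  shows "invariant_form br \<beta>"
  unfolding invariant_form_def
proof (intro allI)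
  fix w x y
  have "\<beta> (br w x) y = \<beta> (br y w) x" by (rule cyclic)
  also have "\<dots> = \<beta> x (br y w)" by (rule sym)
  also have "\<dots> = - \<beta> x (br w y)" by (simp add: br_skew[of w y] neg_right)
  finally show "\<beta> (br w x) y + \<beta> x (br w y) = 0" by simp
qed

lemma quadlinear_compose:
  assumes "quadlinear s1 s2 s3 s4 t F"
    and "Vector_Spaces.linear s3 s3 g" and "Vector_Spaces.linear s4 s4 h"
  shows "quadlinear s1 s2 s3 s4 t (\<lambda>a b c d. F a b (g c) (h d))"
  using assms Vector_Spaces.linear_compose[of s3 s3 g t]
    Vector_Spaces.linear_compose[of s4 s4 h t]
  unfolding quadlinear_def comp_def by blast

lemma linear_compose_sub':
  assumes "Vector_Spaces.linear s t \<phi>" and "Vector_Spaces.linear s t \<psi>"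
  shows "Vector_Spaces.linear s t (\<lambda>x. \<phi> x - \<psi> x)"
proof -
  from assms(1) have "vector_space s" and "vector_space t"
    by (simp_all add: linear_iff)
  then interpret vector_space_pair s t
    by (simp add: vector_space_pair_def)
  show ?thesis
    using assms by (rule linear_compose_sub)
qed

lemma quadlinear_diff:
  assumes "quadlinear s1 s2 s3 s4 t F" and "quadlinear s1 s2 s3 s4 t G"
  shows "quadlinear s1 s2 s3 s4 t (\<lambda>a b c d. F a b c d - G a b c d)"
  using assms unfolding quadlinear_def by (intro conjI allI linear_compose_sub') auto

locale current_cocycle =
  fixes sA :: "'k::field \<Rightarrow> 'a::comm_ring_1 \<Rightarrow> 'a"
    and sL :: "'k \<Rightarrow> 'l::ab_group_add \<Rightarrow> 'l"
    and br :: "'l \<Rightarrow> 'l \<Rightarrow> 'l"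
    and sZ :: "'k \<Rightarrow> 'z::ab_group_add \<Rightarrow> 'z"
    and f :: "'a \<Rightarrow> 'l \<Rightarrow> 'a \<Rightarrow> 'l \<Rightarrow> 'z"
    and f1 :: "'a \<Rightarrow> 'a \<Rightarrow> 'l \<Rightarrow> 'l \<Rightarrow> 'z"
    and f2 :: "'a \<Rightarrow> 'l \<Rightarrow> 'l \<Rightarrow> 'z"
    and f3 :: "'a \<Rightarrow> 'a \<Rightarrow> 'l \<Rightarrow> 'l \<Rightarrow> 'z"
  assumes two: "(2::'k) \<noteq> 0"
    and lie: "lie_algebra sL br"
    and Z: "vector_space sZ"
    and f_cocycle: "\<And>a b c x y z.
          f (a * b) (br x y) c z + f (b * c) (br y z) a x + f (c * a) (br z x) b y = 0"
    and f1_lin: "quadlinear sA sA sL sL sZ f1"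
    and f1_alt: "\<And>a x y. f1 a a x y = 0"
    and f1_sym: "\<And>a b x y. f1 a b x y = f1 a b y x"
    and f3_sym: "\<And>a b x y. f3 a b x y = f3 b a x y"
    and decomp: "\<And>a b x y. f a x b y = f1 a b x y + f2 (a * b) x y + (f3 a b x y - f3 (a * b) 1 x y)"

sublocale current_cocycle \<subseteq> Z: vector_space sZ
  by (rule Z)

sublocale current_cocycle \<subseteq> LZ: vector_space_pair sL sZ
  using lie Z by (simp add: lie_algebra_def vector_space_pair_def)

context current_cocycle
begin

lemma f1_linear:
  "Vector_Spaces.linear sA sZ (\<lambda>a. f1 a b x y)" "Vector_Spaces.linear sA sZ (\<lambda>b. f1 a b x y)"
  "Vector_Spaces.linear sL sZ (\<lambda>x. f1 a b x y)" "Vector_Spaces.linear sL sZ (\<lambda>y. f1 a b x y)"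
  using f1_lin unfolding quadlinear_def by auto

lemma br_skew: "br y x = - br x y"
  using lie unfolding lie_algebra_def linear_iff by (intro skew_if_alternating) auto

lemma f1_skew: "f1 b a x y = - f1 a b x y"
  using f1_linear(1,2) unfolding linear_iff
  by (intro skew_if_alternating[where g = "\<lambda>a b. f1 a b x y"] f1_alt) auto

lemma f1_bracket_cyclic: "f1 a b (br z x) y = f1 a b (br y z) x"
proof -
  let ?d = "f1 a b (br z x) y - f1 a b (br y z) x"
  have "?d + ?d = (f (a * b) (br x y) 1 z + f (b * 1) (br y z) a x + f (1 * a) (br z x) b y)
      - (f (b * a) (br x y) 1 z + f (a * 1) (br y z) b x + f (1 * b) (br z x) a y)"
    by (simp add: decomp f1_skew[of b a] f3_sym algebra_simps)
  also have "\<dots> = 0"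
    by (simp only: f_cocycle) simp
  finally have "?d = 0"
    by (rule Z.add_self_eq_0_imp_eq_0[OF two])
  then show ?thesis by simp
qed

lemma f1_invariant: "invariant_form br (f1 a b)"
proof (rule invariant_formI)
  show "f1 a b x (- y) = - f1 a b x y" for x y
    by (rule LZ.linear_neg[OF f1_linear(4)])
qed (fact f1_sym br_skew f1_bracket_cyclic)+

lemma f3_bracket_eq: "f3 a b (br x y) z = f3 (a * b) 1 (br x y) z"
proof -
  define \<omega> where "\<omega> u v = f3 a b u v - f3 (a * b) 1 u v" for u v
  have cyclic: "\<omega> (br y z) x + \<omega> (br z x) y = 0" for x y z
  proof -
    have "\<omega> (br y z) x + \<omega> (br z x) y =
        (f (a * b) (br x y) 1 z + f (b * 1) (br y z) a x + f (1 * a) (br z x) b y)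
      - (f (a * b * 1) (br x y) 1 z + f (1 * 1) (br y z) (a * b) x + f (1 * (a * b)) (br z x) 1 y)"
      by (simp add: \<omega>_def decomp f1_skew[of b a] f1_skew[of 1 "a * b"]
          f1_bracket_cyclic[of a b] f1_bracket_cyclic[of "a * b" 1] f3_sym algebra_simps)
    also have "\<dots> = 0"
      by (simp only: f_cocycle) simp
    finally show ?thesis .
  qed
  have "\<omega> (br x y) z + \<omega> (br x y) z = (\<omega> (br x y) z + \<omega> (br y z) x)
      + (\<omega> (br z x) y + \<omega> (br x y) z) - (\<omega> (br y z) x + \<omega> (br z x) y)"
    by (simp add: algebra_simps)
  also have "\<dots> = 0"
    using cyclic[of z x y] cyclic[of y z x] cyclic[of x y z] by simp
  finally have "\<omega> (br x y) z = 0"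
    by (rule Z.add_self_eq_0_imp_eq_0[OF two])
  then show ?thesis by (simp add: \<omega>_def)
qed

lemma f1_T0_bracket:
  "f1 (a * b) c (br x y) z + f1 (b * c) a (br x y) z + f1 (c * a) b (br x y) z
     - f1 (a * b * c) 1 (br x y) z = 0"
proof -
  have rotate: "f1 p q (br y z) x = f1 p q (br x y) z" "f1 p q (br z x) y = f1 p q (br x y) z"
    for p q
    using f1_bracket_cyclic[of p q] by metis+
  have prod: "b * c * a = a * b * c" "c * a * b = a * b * c"
    by (simp_all add: mult_ac)
  have f3_eq: "f3 (a * b) c (br x y) z = f3 (a * b * c) 1 (br x y) z"
    "f3 (b * c) a (br y z) x = f3 (a * b * c) 1 (br y z) x"
    "f3 (c * a) b (br z x) y = f3 (a * b * c) 1 (br z x) y"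
    using f3_bracket_eq[of "a * b" c] f3_bracket_eq[of "b * c" a] f3_bracket_eq[of "c * a" b]
    by (simp_all only: prod)
  have "f1 (a * b) c (br x y) z + f1 (b * c) a (br x y) z + f1 (c * a) b (br x y) z
      - f1 (a * b * c) 1 (br x y) z =
      (f (a * b) (br x y) c z + f (b * c) (br y z) a x + f (c * a) (br z x) b y)
    - (f (a * b * c * 1) (br x y) 1 z + f (1 * 1) (br y z) (a * b * c) x
       + f (1 * (a * b * c)) (br z x) 1 y)"
    by (simp only: decomp mult_1_left mult_1_right prod f3_eq rotate f1_skew[of 1 "a * b * c"])
      (simp add: f3_sym algebra_simps)
  also have "\<dots> = 0"
    by (simp only: f_cocycle) simp
  finally show ?thesis .
qed

lemma f1_T0_derived:
  assumes "u \<in> derived_algebra sL br"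
  shows "f1 (a * b) c u v + f1 (b * c) a u v + f1 (c * a) b u v - f1 (a * b * c) 1 u v = 0"
proof -
  have "Vector_Spaces.linear sL sZ
      (\<lambda>u. f1 (a * b) c u v + f1 (b * c) a u v + f1 (c * a) b u v - f1 (a * b * c) 1 u v)"
    by (intro LZ.linear_compose_sub LZ.linear_compose_add f1_linear(3))
  then show ?thesis
  proof (rule LZ.linear_eq_0_on_span)
    show "u \<in> LZ.vs1.span {br x y | x y. True}"
      using assms by (simp add: derived_algebra_def)
  qed (clarify, rule f1_T0_bracket)
qed

end

locale current_cocycle_split = current_cocycle +
  fixes p
  assumes p_lin: "Vector_Spaces.linear sL sL p"
    and p_derived: "\<And>x. x \<in> derived_algebra sL br \<Longrightarrow> p x = 0"
    and p_compl: "\<And>x. x - p x \<in> derived_algebra sL br"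
begin

definition f10
  where "f10 a b x y = f1 a b (p x) (p y)"

definition f11
  where "f11 a b x y = f1 a b x y - f10 a b x y"

lemma f10_quadlinear: "quadlinear sA sA sL sL sZ f10"
  unfolding f10_def[abs_def] by (rule quadlinear_compose[OF f1_lin p_lin p_lin])

lemma f11_quadlinear: "quadlinear sA sA sL sL sZ f11"
  unfolding f11_def[abs_def] by (rule quadlinear_diff[OF f1_lin f10_quadlinear])

lemma f10_alt: "f10 a a x y = 0" and f11_alt: "f11 a a x y = 0"
  by (simp_all add: f11_def f10_def f1_alt)

lemma f10_sym: "f10 a b x y = f10 a b y x" and f11_sym: "f11 a b x y = f11 a b y x"
  unfolding f11_def f10_def by (metis f1_sym)+

lemma f1_eq_f10_add_f11: "f1 a b x y = f10 a b x y + f11 a b x y"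
  by (simp add: f11_def)

lemma f10_derived: "y \<in> derived_algebra sL br \<Longrightarrow> f10 a b x y = 0"
  by (simp add: f10_def p_derived LZ.linear_0[OF f1_linear(4)])

lemma f11_invariant: "invariant_form br (f11 a b)"
proof -
  have "p (br x y) = 0" for x y
    by (rule p_derived) (auto simp: derived_algebra_def intro: LZ.vs1.span_base)
  then show ?thesis
    using f1_invariant[of a b] LZ.linear_0[OF f1_linear(3)] LZ.linear_0[OF f1_linear(4)]
    unfolding invariant_form_def f11_def f10_def by simp
qed

lemma f11_eq: "f11 a b x y = f1 a b (x - p x) y + f1 a b (y - p y) (p x)"
  by (simp add: f11_def f10_def LZ.linear_diff[OF f1_linear(3)] LZ.linear_diff[OF f1_linear(4)]
      f1_sym[of a b _ "p x"])

lemma f11_T0: "f11 (a * b) c x y + f11 (b * c) a x y + f11 (c * a) b x y - f11 (a * b * c) 1 x y = 0"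
  using f1_T0_derived[OF p_compl, where v = y] f1_T0_derived[OF p_compl, where v = "p x"]
  unfolding f11_eq by (simp add: algebra_simps)

end

theorem corollary3p5:
  fixes sA :: "'k::field \<Rightarrow> 'a::comm_ring_1 \<Rightarrow> 'a"
    and sL :: "'k \<Rightarrow> 'l::ab_group_add \<Rightarrow> 'l"
    and br :: "'l \<Rightarrow> 'l \<Rightarrow> 'l"
    and sZ :: "'k \<Rightarrow> 'z::ab_group_add \<Rightarrow> 'z"
    and f :: "'a \<Rightarrow> 'l \<Rightarrow> 'a \<Rightarrow> 'l \<Rightarrow> 'z"
    and f1 :: "'a \<Rightarrow> 'a \<Rightarrow> 'l \<Rightarrow> 'l \<Rightarrow> 'z"
    and f2 :: "'a \<Rightarrow> 'l \<Rightarrow> 'l \<Rightarrow> 'z"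
    and f3 :: "'a \<Rightarrow> 'a \<Rightarrow> 'l \<Rightarrow> 'l \<Rightarrow> 'z"
  assumes two: "(2::'k) \<noteq> 0"
    and A: "comm_algebra sA"
    and L: "lie_algebra sL br"
    and Z: "vector_space sZ"
    \<comment> \<open>f(a x, b y): an alternating bilinear map on g = A \<otimes> k\<close>
    and f_lin: "quadlinear sA sL sA sL sZ f"
    and f_skew: "\<And>a x b y. f a x b y + f b y a x = 0"
    and f_alt: "\<And>a x. f a x a x = 0"
    \<comment> \<open>2-cocycle condition for the trivial module z\<close>
    and f_cocycle: "\<And>a b c x y z.
          f (a * b) (br x y) c z + f (b * c) (br y z) a x + f (c * a) (br z x) b y = 0"
    \<comment> \<open>f1 : \<Lambda>^2(A) \<otimes> S^2(k) \<rightarrow> z\<close>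
    and f1_lin: "quadlinear sA sA sL sL sZ f1"
    and f1_alt: "\<And>a x y. f1 a a x y = 0"
    and f1_sym: "\<And>a b x y. f1 a b x y = f1 a b y x"
    \<comment> \<open>f2 : A \<otimes> \<Lambda>^2(k) \<rightarrow> z\<close>
    and f2_lin: "trilinear sA sL sL sZ f2"
    and f2_alt: "\<And>a x. f2 a x x = 0"
    \<comment> \<open>f3 : I_A \<otimes> \<Lambda>^2(k) \<rightarrow> z, given as the restriction of a linear map on S^2(A) \<otimes> \<Lambda>^2(k)\<close>
    and f3_lin: "quadlinear sA sA sL sL sZ f3"
    and f3_sym: "\<And>a b x y. f3 a b x y = f3 b a x y"
    and f3_alt: "\<And>a b x. f3 a b x x = 0"
    \<comment> \<open>f = f1 \<circ> p1 + f2 \<circ> p2 + f3 \<circ> p3\<close>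
    and decomp: "\<And>a b x y. f a x b y = f1 a b x y + f2 (a * b) x y + (f3 a b x y - f3 (a * b) 1 x y)"
  shows "\<exists>f10 f11 :: 'a \<Rightarrow> 'a \<Rightarrow> 'l \<Rightarrow> 'l \<Rightarrow> 'z.
     quadlinear sA sA sL sL sZ f10 \<and> (\<forall>a x y. f10 a a x y = 0) \<and> (\<forall>a b x y. f10 a b x y = f10 a b y x) \<and>
     quadlinear sA sA sL sL sZ f11 \<and> (\<forall>a x y. f11 a a x y = 0) \<and> (\<forall>a b x y. f11 a b x y = f11 a b y x) \<and>
     (\<forall>a b x y. f1 a b x y = f10 a b x y + f11 a b x y) \<and>
     (\<forall>a b x y. y \<in> derived_algebra sL br \<longrightarrow> f10 a b x y = 0) \<and>
     (\<forall>a b. invariant_form br (f11 a b)) \<and>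
     (\<forall>a b c x y. f11 (a * b) c x y + f11 (b * c) a x y + f11 (c * a) b x y - f11 (a * b * c) 1 x y = 0)"
proof -
  have cocycle: "current_cocycle sA sL br sZ f f1 f2 f3"
    by (rule current_cocycle.intro) fact+
  then interpret current_cocycle sA sL br sZ f f1 f2 f3 .
  obtain p where p: "Vector_Spaces.linear sL sL p"
    "\<And>x. x \<in> derived_algebra sL br \<Longrightarrow> p x = 0" "\<And>x. x - p x \<in> derived_algebra sL br"
    using LZ.vs1.exists_linear_projection_along_span[where S = "{br x y | x y. True}"]
    unfolding derived_algebra_def by blast
  interpret current_cocycle_split sA sL br sZ f f1 f2 f3 p
    by (intro current_cocycle_split.intro current_cocycle_split_axioms.intro cocycle p)
  show ?thesis
    by (intro exI[of _ f10] exI[of _ f11] conjI allI impI f10_quadlinear f11_quadlinear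
        f10_alt f11_alt f10_sym f11_sym f1_eq_f10_add_f11 f10_derived f11_invariant f11_T0)
qed

end
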